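(* Let $(V,\{A,B\})$ be a forking problem in which every agent's preference is non-interleaving. Then the profile admits exactly one stable assignment.
   Context: Agents $V=\{v_1,\dots,v_n\}$; two alternatives $A,B$. Each agent $v_i$ has a strict total order $\succ_i$ on $\{A,B\}\times\{1,\dots,n\}$, where $(S,j)$ means being in the community adopting $S$ of size $j$; it is monotonic if $(S,j)\succ_i(S,k)$ whenever $k<j$. A preference is non-interleaving if it is monotonic and either $(A,1)\succ_i(B,n)$ or $(B,1)\succ_i(A,n)$. An assignment is a map $f:V\to\{A,B\}$; $v_i$ prefers $f$ to $g$ if $(f(v_i),|f^{-1}(f(v_i))|)\succ_i(g(v_i),|g^{-1}(g(v_i))|)$. An assignment $f$ is stable if there is no assignment $f'\neq f$ such that every agent $v_i$ with $f'(v_i)\neq f(v_i)$ prefers $f'$ to $f$. *)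

theory Defs
  imports "HOL-Library.FuncSet"
begin

datatype alt = A | B

text \<open>A forking problem: a finite set of agents V (n = card V), two alternatives A, B,
and for each agent v a strict relation P v on alt \<times> nat; P v x y means x \<succ>_v y.
Only its restriction to alt \<times> {1..n} matters.\<close>

definition strict_total_order_on :: "'a set \<Rightarrow> ('a \<Rightarrow> 'a \<Rightarrow> bool) \<Rightarrow> bool" where
  "strict_total_order_on X R \<longleftrightarrow>
     (\<forall>x\<in>X. \<not> R x x) \<and>
     (\<forall>x\<in>X. \<forall>y\<in>X. \<forall>z\<in>X. R x y \<longrightarrow> R y z \<longrightarrow> R x z) \<and>
     (\<forall>x\<in>X. \<forall>y\<in>X. x \<noteq> y \<longrightarrow> R x y \<or> R y x)"

definition outcomes :: "nat \<Rightarrow> (alt \<times> nat) set" where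
  "outcomes n = UNIV \<times> {1..n}"

definition forking_problem :: "'v set \<Rightarrow> ('v \<Rightarrow> alt \<times> nat \<Rightarrow> alt \<times> nat \<Rightarrow> bool) \<Rightarrow> bool" where
  "forking_problem V P \<longleftrightarrow> finite V \<and>
     (\<forall>v\<in>V. strict_total_order_on (outcomes (card V)) (P v))"

definition monotonic_pref :: "nat \<Rightarrow> (alt \<times> nat \<Rightarrow> alt \<times> nat \<Rightarrow> bool) \<Rightarrow> bool" where
  "monotonic_pref n R \<longleftrightarrow> (\<forall>S j k. 1 \<le> k \<and> k < j \<and> j \<le> n \<longrightarrow> R (S, j) (S, k))"

definition non_interleaving :: "nat \<Rightarrow> (alt \<times> nat \<Rightarrow> alt \<times> nat \<Rightarrow> bool) \<Rightarrow> bool" where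
  "non_interleaving n R \<longleftrightarrow> monotonic_pref n R \<and> (R (A, 1) (B, n) \<or> R (B, 1) (A, n))"

text \<open>Assignments are functions V \<rightarrow> {A,B}, represented extensionally (undefined outside V).\<close>

definition assignments :: "'v set \<Rightarrow> ('v \<Rightarrow> alt) set" where
  "assignments V = V \<rightarrow>\<^sub>E (UNIV :: alt set)"

definition community_size :: "'v set \<Rightarrow> ('v \<Rightarrow> alt) \<Rightarrow> 'v \<Rightarrow> nat" where
  "community_size V f v = card {w \<in> V. f w = f v}"

definition prefers :: "'v set \<Rightarrow> ('v \<Rightarrow> alt \<times> nat \<Rightarrow> alt \<times> nat \<Rightarrow> bool) \<Rightarrow> 'v \<Rightarrow> ('v \<Rightarrow> alt) \<Rightarrow> ('v \<Rightarrow> alt) \<Rightarrow> bool" where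
  "prefers V P v f g \<longleftrightarrow> P v (f v, community_size V f v) (g v, community_size V g v)"

definition stable :: "'v set \<Rightarrow> ('v \<Rightarrow> alt \<times> nat \<Rightarrow> alt \<times> nat \<Rightarrow> bool) \<Rightarrow> ('v \<Rightarrow> alt) \<Rightarrow> bool" where
  "stable V P f \<longleftrightarrow> f \<in> assignments V \<and>
     \<not> (\<exists>f' \<in> assignments V. f' \<noteq> f \<and> (\<forall>v\<in>V. f' v \<noteq> f v \<longrightarrow> prefers V P v f' f))"

end

theory Submission
  imports Defs
begin

text \<open>Under a non-interleaving preference every agent has a favourite alternative that it
prefers whatever the community sizes are. Giving every agent its favourite is then stable,
since an agent who switches can only lose, and it blocks every other assignment, since all
agents that switch to it gain.\<close>

lemma strict_total_order_on_trans:
  "strict_total_order_on X R \<Longrightarrow> x \<in> X \<Longrightarrow> y \<in> X \<Longrightarrow> z \<in> X \<Longrightarrow> R x y \<Longrightarrow> R y z \<Longrightarrow> R x z"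
  unfolding strict_total_order_on_def by blast

lemma strict_total_order_on_asym:
  "strict_total_order_on X R \<Longrightarrow> x \<in> X \<Longrightarrow> y \<in> X \<Longrightarrow> R x y \<Longrightarrow> \<not> R y x"
  unfolding strict_total_order_on_def by blast

lemma monotonic_pref_extends_extremes:
  assumes order: "strict_total_order_on (outcomes n) R" and mono: "monotonic_pref n R"
    and extremes: "R (S, 1) (T, n)" and j: "j \<in> {1..n}" and k: "k \<in> {1..n}"
  shows "R (S, j) (T, k)"
proof -
  have in_outcomes: "(S, 1) \<in> outcomes n" "(T, n) \<in> outcomes n" "(S, j) \<in> outcomes n" "(T, k) \<in> outcomes n"
    using j k by (auto simp: outcomes_def)
  have "j = 1 \<or> R (S, j) (S, 1)"
    using mono j unfolding monotonic_pref_def by (cases "j = 1") auto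
  moreover have "k = n \<or> R (T, n) (T, k)"
    using mono k unfolding monotonic_pref_def by (cases "k = n") auto
  ultimately show ?thesis
    using extremes strict_total_order_on_trans[OF order] in_outcomes by metis
qed

definition favourite :: "nat \<Rightarrow> (alt \<times> nat \<Rightarrow> alt \<times> nat \<Rightarrow> bool) \<Rightarrow> alt" where
  "favourite n R = (if R (A, 1) (B, n) then A else B)"

lemma non_interleaving_favourite_dominates:
  assumes order: "strict_total_order_on (outcomes n) R" and "non_interleaving n R"
    and "S \<noteq> favourite n R" and "j \<in> {1..n}" and "k \<in> {1..n}"
  shows "R (favourite n R, j) (S, k)"
proof -
  have mono: "monotonic_pref n R" and "R (A, 1) (B, n) \<or> R (B, 1) (A, n)"
    using \<open>non_interleaving n R\<close> unfolding non_interleaving_def by auto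
  then have "R (favourite n R, 1) (S, n)"
    using \<open>S \<noteq> favourite n R\<close> by (cases S) (auto simp: favourite_def)
  then show ?thesis
    using monotonic_pref_extends_extremes[OF order mono] assms(4,5) by blast
qed

lemma community_size_range:
  assumes "finite V" and "v \<in> V"
  shows "community_size V g v \<in> {1..card V}"
proof -
  have "card {w \<in> V. g w = g v} \<le> card V"
    using \<open>finite V\<close> by (intro card_mono) auto
  moreover have "card {w \<in> V. g w = g v} \<ge> 1"
    using assms by (auto simp: Suc_le_eq card_gt_0_iff)
  ultimately show ?thesis
    unfolding community_size_def by simp
qed

definition dominant_choices :: "'v set \<Rightarrow> ('v \<Rightarrow> alt \<times> nat \<Rightarrow> alt \<times> nat \<Rightarrow> bool) \<Rightarrow> ('v \<Rightarrow> alt) \<Rightarrow> bool" where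
  "dominant_choices V P d \<longleftrightarrow>
     (\<forall>v\<in>V. \<forall>g h. g v = d v \<longrightarrow> h v \<noteq> d v \<longrightarrow> prefers V P v g h \<and> \<not> prefers V P v h g)"

lemma dominant_choices_favourite:
  assumes "forking_problem V P" and "\<forall>v\<in>V. non_interleaving (card V) (P v)"
  shows "dominant_choices V P (\<lambda>v. favourite (card V) (P v))"
  unfolding dominant_choices_def
proof (intro ballI allI impI)
  fix v g h
  assume v: "v \<in> V" and "g v = favourite (card V) (P v)" and "h v \<noteq> favourite (card V) (P v)"
  have order: "strict_total_order_on (outcomes (card V)) (P v)" and "finite V"
    using assms(1) v unfolding forking_problem_def by auto
  have sizes: "community_size V g v \<in> {1..card V}" "community_size V h v \<in> {1..card V}"
    using community_size_range[OF \<open>finite V\<close> v] by auto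
  have "prefers V P v g h"
    unfolding prefers_def \<open>g v = favourite (card V) (P v)\<close>
    using non_interleaving_favourite_dominates[OF order _ \<open>h v \<noteq> _\<close> sizes] assms(2) v by blast
  moreover have "(g v, community_size V g v) \<in> outcomes (card V)"
    and "(h v, community_size V h v) \<in> outcomes (card V)"
    using sizes by (auto simp: outcomes_def)
  ultimately show "prefers V P v g h \<and> \<not> prefers V P v h g"
    using strict_total_order_on_asym[OF order] unfolding prefers_def by blast
qed

lemma assignments_eqI:
  "f \<in> assignments V \<Longrightarrow> g \<in> assignments V \<Longrightarrow> (\<And>v. v \<in> V \<Longrightarrow> f v = g v) \<Longrightarrow> f = g"
  unfolding assignments_def by (rule PiE_ext)

lemma stable_restrict_dominant_choices:
  assumes dominant: "dominant_choices V P d"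
  shows "stable V P (restrict d V)"
proof -
  have "restrict d V \<in> assignments V"
    unfolding assignments_def by simp
  moreover have "\<not> (\<forall>v\<in>V. f' v \<noteq> d v \<longrightarrow> prefers V P v f' (restrict d V))"
    if "f' \<in> assignments V" and "f' \<noteq> restrict d V" for f'
  proof -
    have "\<exists>v\<in>V. f' v \<noteq> restrict d V v"
      using that assignments_eqI[of f' V "restrict d V"] \<open>restrict d V \<in> assignments V\<close> by blast
    then obtain v where "v \<in> V" and "f' v \<noteq> d v"
      by auto
    then show ?thesis
      using dominant unfolding dominant_choices_def by auto
  qed
  ultimately show ?thesis
    unfolding stable_def by auto
qed

lemma stable_eq_restrict_dominant_choices:
  assumes dominant: "dominant_choices V P d" and "stable V P f"
  shows "f = restrict d V"
proof (rule ccontr)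
  assume "f \<noteq> restrict d V"
  moreover have "restrict d V \<in> assignments V"
    unfolding assignments_def by simp
  moreover have "\<forall>v\<in>V. restrict d V v \<noteq> f v \<longrightarrow> prefers V P v (restrict d V) f"
    using dominant unfolding dominant_choices_def by auto
  ultimately show False
    using \<open>stable V P f\<close> unfolding stable_def by metis
qed

theorem mainTheorem2:
  fixes V :: "'v set" and P :: "'v \<Rightarrow> alt \<times> nat \<Rightarrow> alt \<times> nat \<Rightarrow> bool"
  assumes "forking_problem V P"
    and "\<forall>v\<in>V. non_interleaving (card V) (P v)"
  shows "\<exists>!f. stable V P f"
proof -
  let ?d = "\<lambda>v. favourite (card V) (P v)"
  have "dominant_choices V P ?d"
    using dominant_choices_favourite[OF assms] .
  then have "stable V P (restrict ?d V)" and "\<And>f. stable V P f \<Longrightarrow> f = restrict ?d V"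
    using stable_restrict_dominant_choices stable_eq_restrict_dominant_choices by blast+
  then show ?thesis
    by blast
qed

end
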